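(* For every integer $n\ge 2$ and $L=|\tau^n(a)|=2^{n+1}-1$, one has $\mathcal{C}(L)=2^{n+2}+2^n-2$.
   Context: Let $\mathcal{A}=\{a,x,y,z\}$ and let $\tau$ be the substitution (monoid morphism on finite words over $\mathcal{A}$) defined by $\tau(a)=axa$, $\tau(x)=y$, $\tau(y)=z$, $\tau(z)=x$. For a finite word $w$, $\mathrm{Sub}(w)$ denotes the set of finite (contiguous) subwords of $w$. Let $\mathrm{Sub}_\tau=\bigcup_{s\in\mathcal{A},\,n\in\mathbb{N}\cup\{0\}}\mathrm{Sub}(\tau^n(s))$. The word complexity is $\mathcal{C}(L)=$ the number of elements of $\mathrm{Sub}_\tau$ of length $L$. *)

theory Defs
  imports Main
begin

datatype letter = A | X | Y | Z

fun tau_letter :: "letter \<Rightarrow> letter list" where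
  "tau_letter A = [A, X, A]"
| "tau_letter X = [Y]"
| "tau_letter Y = [Z]"
| "tau_letter Z = [X]"

definition tau :: "letter list \<Rightarrow> letter list" where
  "tau w = concat (map tau_letter w)"

definition Sub :: "letter list \<Rightarrow> letter list set" where
  "Sub w = {v. \<exists>p s. w = p @ v @ s}"

definition Sub_tau :: "letter list set" where
  "Sub_tau = (\<Union>c. \<Union>n. Sub ((tau ^^ n) [c]))"

definition complexity :: "nat \<Rightarrow> nat" where
  "complexity L = card {v \<in> Sub_tau. length v = L}"

end

theory Submission
  imports Defs
begin

text \<open>
  Let \<open>ruler j\<close> be \<open>A\<close> for odd \<open>j\<close> and the \<open>k\<close>-th letter of the cycle \<open>X, Y, Z\<close> when
  \<open>j = 2^k * m\<close> with \<open>m\<close> odd and \<open>k \<ge> 1\<close>. Then \<open>\<tau>^n(a) = ruler 1 \<dots> ruler (2^(n+1) - 1)\<close>,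
  so the factors of length \<open>L \<ge> 2\<close> are exactly the windows \<open>ruler p \<dots> ruler (p + L - 1)\<close>,
  \<open>p \<ge> 1\<close>. For \<open>L = 2^(n+1) - 1\<close> the window determines \<open>p mod 2^n\<close>: if \<open>p\<close> and \<open>p'\<close> first
  differ in bit \<open>k\<close>, then at an offset where \<open>p + i \<equiv> 2^(k+1) (mod 2^(k+2))\<close> the two windows
  show the letters of valuations \<open>k + 1\<close> and \<open>k\<close>. Away from the multiples of \<open>2^n\<close> the window
  only depends on \<open>p mod 2^n\<close>, and it contains two consecutive multiples of \<open>2^n\<close> unless
  \<open>p \<equiv> 1\<close>. Of two consecutive multiples of \<open>2^n\<close> one has valuation exactly \<open>n\<close>, the other
  carries any of \<open>X, Y, Z\<close>; this gives 5 choices, against 3 when \<open>p \<equiv> 1\<close>, so there are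
  \<open>3 + 5 (2^n - 1) = 2^(n+2) + 2^n - 2\<close> windows.
\<close>

lemma card_image_eq_if_same_fibres:
  assumes "\<And>x y. x \<in> P \<Longrightarrow> y \<in> P \<Longrightarrow> f x = f y \<longleftrightarrow> g x = g y"
  shows "card (f ` P) = card (g ` P)"
proof -
  define h where "h = g \<circ> inv_into P f"
  have hf: "h (f x) = g x" if "x \<in> P" for x
    using assms[OF inv_into_into[of "f x" f P] that] that by (simp add: h_def f_inv_into_f)
  have "bij_betw h (f ` P) (g ` P)"
    unfolding bij_betw_def inj_on_def using assms by (auto simp: hf image_image)
  then show ?thesis by (rule bij_betw_same_card)
qed

lemma exists_add_mod_eq: "0 < (m::nat) \<Longrightarrow> c < m \<Longrightarrow> \<exists>i<m. (p + i) mod m = c"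
proof -
  assume m: "0 < m" "c < m"
  define i where "i = (c + m - p mod m) mod m"
  have "(p + i) mod m = (p mod m + (c + m - p mod m)) mod m"
    by (simp add: i_def mod_add_right_eq mod_add_left_eq)
  also have "p mod m + (c + m - p mod m) = c + m"
    using m mod_less_divisor[of m p] by linarith
  finally show ?thesis using m by (intro exI[of _ i]) (simp add: i_def)
qed

lemma mod_double_eq_shift:
  fixes a b M :: nat
  assumes "0 < M" "a mod M = b mod M" "a mod (2 * M) \<noteq> b mod (2 * M)"
  shows "b mod (2 * M) = (a + M) mod (2 * M)"
proof -
  have split: "x mod (2 * M) = M * (x div M mod 2) + x mod M" for x
    using mod_mult2_eq[of x M 2] by (simp add: mult.commute)
  have "b div M mod 2 \<noteq> a div M mod 2" using assms(2,3) split by metis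
  moreover have "(a + M) div M = a div M + 1" using assms(1) div_add_self2[of M a] by simp
  moreover have "y mod 2 \<noteq> x mod 2 \<Longrightarrow> y mod 2 = (x + 1) mod 2" for x y :: nat
    by presburger
  ultimately have "b div M mod 2 = (a + M) div M mod 2" by simp
  then show ?thesis using assms(2) split[of b] split[of "a + M"] by simp
qed

definition dist_to_multiple :: "nat \<Rightarrow> nat \<Rightarrow> nat" where
  "dist_to_multiple N p = (N - p mod N) mod N"

lemma dist_to_multiple_lt: "0 < N \<Longrightarrow> dist_to_multiple N p < N"
  by (simp add: dist_to_multiple_def)

lemma add_dist_to_multiple_mod: "(p + dist_to_multiple N p) mod N = 0" if "0 < N"
proof -
  have "(p + dist_to_multiple N p) mod N = (p mod N + (N - p mod N)) mod N"
    unfolding dist_to_multiple_def by (metis mod_add_eq mod_mod_trivial)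
  also have "p mod N + (N - p mod N) = N"
    using that by (simp add: less_imp_le_nat)
  finally show ?thesis by simp
qed

lemma mod_eq_dist_to_multiple:
  assumes N: "0 < N" and zero: "(p + i) mod N = 0" shows "i mod N = dist_to_multiple N p"
proof -
  define s where "s = p mod N + i mod N"
  have "s mod N = 0" using zero by (simp add: s_def mod_add_eq)
  moreover have "s < 2 * N"
    using mod_less_divisor[OF N, of p] mod_less_divisor[OF N, of i] unfolding s_def by linarith
  ultimately have "s = 0 \<or> s = N"
  proof (cases "s < N")
    case False
    with \<open>s < 2 * N\<close> have "s mod N = s - N" by (simp add: le_mod_geq)
    with False \<open>s mod N = 0\<close> show ?thesis by simp
  qed simp
  moreover have "i mod N < N" using N by simp
  ultimately show ?thesis
    unfolding dist_to_multiple_def s_def by auto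
qed

lemma dist_to_multiple_mod_eq_1: "p mod N = 1 \<Longrightarrow> dist_to_multiple N p = N - 1"
  by (cases "N = 0") (simp_all add: dist_to_multiple_def)

lemma multiples_in_window:
  assumes N: "0 < N" and zero: "(p + i) mod N = 0" and i: "i < 2 * N - 1"
  shows "i = dist_to_multiple N p \<or> (i = dist_to_multiple N p + N \<and> p mod N \<noteq> 1)"
proof -
  have i_split: "i = N * (i div N) + dist_to_multiple N p"
    using mod_eq_dist_to_multiple[OF N zero] div_mult_mod_eq[of i N] by (simp add: mult.commute)
  have "i div N < 2" using i by (simp add: div_less_iff_less_mult)
  then consider "i div N = 0" | "i div N = 1" by linarith
  then show ?thesis
  proof cases
    case 2
    have "p mod N \<noteq> 1"
    proof
      assume "p mod N = 1"
      then show False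
        using i i_split 2 dist_to_multiple_mod_eq_1 by simp
    qed
    with 2 i_split show ?thesis by simp
  qed (use i_split in simp)
qed

lemma dist_to_multiple_add_lt:
  assumes "1 < N" "p mod N \<noteq> 1" shows "dist_to_multiple N p + N < 2 * N - 1"
proof (cases "p mod N = 0")
  case False
  with assms have "2 \<le> p mod N" by linarith
  then show ?thesis using assms(1) by (simp add: dist_to_multiple_def)
qed (use assms in \<open>simp add: dist_to_multiple_def\<close>)

lemma Sub_map_upt:
  assumes "a \<le> b"
  shows "v \<in> Sub (map f [a..<b]) \<longleftrightarrow> (\<exists>p\<ge>a. p + length v \<le> b \<and> v = map f [p..<p + length v])"
proof
  assume "v \<in> Sub (map f [a..<b])"
  then obtain u w where uvw: "map f [a..<b] = u @ v @ w" by (auto simp: Sub_def)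
  then have "length u + length v \<le> b - a"
    by (metis add.assoc le_add1 length_append length_map length_upt)
  moreover have "v = take (length v) (drop (length u) (map f [a..<b]))"
    using uvw by simp
  ultimately show "\<exists>p\<ge>a. p + length v \<le> b \<and> v = map f [p..<p + length v]"
    using assms by (intro exI[of _ "a + length u"]) (simp add: drop_map take_map take_upt)
next
  assume "\<exists>p\<ge>a. p + length v \<le> b \<and> v = map f [p..<p + length v]"
  then obtain p where p: "a \<le> p" "p + length v \<le> b" "v = map f [p..<p + length v]"
    by blast
  have upt_split: "[i..<k] = [i..<j] @ [j..<k]" if "i \<le> j" "j \<le> k" for i j k :: nat
    using upt_add_eq_append[of i j "k - j"] that by simp
  have "[a..<b] = [a..<p] @ [p..<p + length v] @ [p + length v..<b]"
    using p upt_split[of a p b] upt_split[of p "p + length v" b] by simp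
  then have "map f [a..<b] = map f [a..<p] @ v @ map f [p + length v..<b]"
    using p(3) by simp
  then show "v \<in> Sub (map f [a..<b])" unfolding Sub_def by blast
qed

fun rot_letter :: "letter \<Rightarrow> letter" where
  "rot_letter A = X" | "rot_letter X = Y" | "rot_letter Y = Z" | "rot_letter Z = X"

fun ruler :: "nat \<Rightarrow> letter" where
  "ruler j = (if j = 0 \<or> odd j then A else rot_letter (ruler (j div 2)))"

declare ruler.simps [simp del]

lemma rot_letter_neq: "rot_letter x \<noteq> x" "rot_letter x \<noteq> A"
  by (cases x; simp)+

lemma rot_letter_in_XYZ: "rot_letter x \<in> {X, Y, Z}"
  by (cases x) auto

lemma ruler_odd: "odd j \<Longrightarrow> ruler j = A"
  by (simp add: ruler.simps)

lemma ruler_even: "even j \<Longrightarrow> 0 < j \<Longrightarrow> ruler j = rot_letter (ruler (j div 2))"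
  by (subst ruler.simps) simp

lemma ruler_even_in_XYZ: "even j \<Longrightarrow> 0 < j \<Longrightarrow> ruler j \<in> {X, Y, Z}"
  using rot_letter_in_XYZ by (simp only: ruler_even)

lemma ruler_pow2_mult_odd: "odd m \<Longrightarrow> ruler (2 ^ k * m) = (rot_letter ^^ k) A"
proof (induction k)
  case (Suc k)
  then have "0 < m" by (simp add: odd_pos)
  then show ?case using Suc ruler_even[of "2 ^ Suc k * m"] by simp
qed (simp add: ruler_odd)

lemma ruler_eq_if_mod_pow2: "j mod 2 ^ Suc k = 2 ^ k \<Longrightarrow> ruler j = (rot_letter ^^ k) A"
proof -
  assume "j mod 2 ^ Suc k = 2 ^ k"
  then have "j = 2 ^ k * (2 * (j div 2 ^ Suc k) + 1)"
    using div_mult_mod_eq[of j "2 ^ Suc k"] by (simp add: algebra_simps)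
  also have "ruler \<dots> = (rot_letter ^^ k) A"
    by (rule ruler_pow2_mult_odd) simp
  finally show ?thesis .
qed

lemma ruler_mod_pow2: "0 < j mod 2 ^ m \<Longrightarrow> ruler j = ruler (j mod 2 ^ m)"
proof (induction m arbitrary: j)
  case (Suc m)
  show ?case
  proof (cases "odd j")
    case True
    then have "odd (j mod 2 ^ Suc m)"
      by (simp add: odd_iff_mod_2_eq_one mod_mod_cancel)
    with True show ?thesis by (simp add: ruler_odd)
  next
    case False
    have split: "j mod 2 ^ Suc m = 2 * (j div 2 mod 2 ^ m)"
      using mod_mult2_eq[of j 2 "2 ^ m"] False by simp
    with Suc.prems have pos: "0 < j div 2 mod 2 ^ m" by simp
    have "ruler j = rot_letter (ruler (j div 2))"
      using False Suc.prems by (intro ruler_even) (auto intro: gr0I)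
    also have "ruler (j div 2) = ruler (j div 2 mod 2 ^ m)"
      using pos by (rule Suc.IH)
    also have "rot_letter \<dots> = ruler (j mod 2 ^ Suc m)"
      using pos ruler_even[of "2 * (j div 2 mod 2 ^ m)"] unfolding split by simp
    finally show ?thesis .
  qed
qed simp

lemma ruler_pow2_add: "0 < j \<Longrightarrow> j < 2 ^ k \<Longrightarrow> ruler (2 ^ k + j) = ruler j"
  using ruler_mod_pow2[of "2 ^ k + j" k] by simp

lemma rot_letter_pow_A_neq: "(rot_letter ^^ Suc k) A \<noteq> (rot_letter ^^ k) A"
  using rot_letter_neq(1) by simp

lemma rot_letter_pow_A_in_XYZ: "0 < k \<Longrightarrow> (rot_letter ^^ k) A \<in> {X, Y, Z}"
  using rot_letter_in_XYZ by (cases k) auto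

lemma rot_letter_pow_A_onto_XYZ:
  assumes "0 < k" "d \<in> {X, Y, Z}" shows "\<exists>e. (rot_letter ^^ (k + e)) A = d"
proof -
  have shift: "(rot_letter ^^ (k + e)) A = (rot_letter ^^ e) ((rot_letter ^^ k) A)" for e
    by (metis add.commute comp_apply funpow_add)
  have "\<exists>e. (rot_letter ^^ e) c = d" if "c \<in> {X, Y, Z}" for c
  proof -
    have "d \<in> {c, rot_letter c, rot_letter (rot_letter c)}"
      using that assms(2) by auto
    moreover have "(rot_letter ^^ 0) c = c" "(rot_letter ^^ 1) c = rot_letter c"
      "(rot_letter ^^ 2) c = rot_letter (rot_letter c)"
      by (simp_all add: numeral_2_eq_2)
    ultimately show ?thesis by blast
  qed
  then show ?thesis using rot_letter_pow_A_in_XYZ[OF assms(1)] by (simp add: shift)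
qed

definition window :: "nat \<Rightarrow> nat \<Rightarrow> letter list" where
  "window L p = map ruler [p..<p + L]"

lemma window_eq_iff: "window L p = window L p' \<longleftrightarrow> (\<forall>i<L. ruler (p + i) = ruler (p' + i))"
  by (auto simp: window_def list_eq_iff_nth_eq)

lemma ruler_differs_at_mod_pow2:
  assumes at: "(p + i) mod 2 ^ (k + 2) = 2 ^ (k + 1)"
    and eq: "p mod 2 ^ k = p' mod 2 ^ k" and ne: "p mod 2 ^ (k + 1) \<noteq> p' mod 2 ^ (k + 1)"
  shows "ruler (p + i) \<noteq> ruler (p' + i)"
proof -
  have "ruler (p + i) = (rot_letter ^^ Suc k) A"
    using at by (intro ruler_eq_if_mod_pow2) simp
  moreover have "ruler (p' + i) = (rot_letter ^^ k) A"
  proof (rule ruler_eq_if_mod_pow2)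
    have zero: "(p + i) mod 2 ^ (k + 1) = 0"
      using at mod_mod_cancel[of "2 ^ (k + 1)" "2 ^ (k + 2)" "p + i"] by (simp add: le_imp_power_dvd)
    have "p' mod 2 ^ (k + 1) = (p + 2 ^ k) mod 2 ^ (k + 1)"
      using mod_double_eq_shift[of "2 ^ k" p p'] eq ne by simp
    then have "(p' + i) mod 2 ^ (k + 1) = (p + 2 ^ k + i) mod 2 ^ (k + 1)"
      by (rule mod_add_cong) simp
    also have "\<dots> = (p + i + 2 ^ k) mod 2 ^ (k + 1)"
      by (simp only: add_ac)
    also have "\<dots> = ((p + i) mod 2 ^ (k + 1) + 2 ^ k) mod 2 ^ (k + 1)"
      by (rule mod_add_left_eq[symmetric])
    finally show "(p' + i) mod 2 ^ Suc k = 2 ^ k" using zero by simp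
  qed
  ultimately show ?thesis using rot_letter_pow_A_neq by simp
qed

lemma mod_pow2_Suc_eq_if_window_eq:
  assumes eq: "window L p = window L p'" and le: "2 ^ (k + 2) \<le> L + 1"
    and low: "p mod 2 ^ k = p' mod 2 ^ k"
  shows "p mod 2 ^ (k + 1) = p' mod 2 ^ (k + 1)"
proof (rule ccontr)
  assume ne: "p mod 2 ^ (k + 1) \<noteq> p' mod 2 ^ (k + 1)"
  have same: "ruler (p + i) = ruler (p' + i)" if "i < L" for i
    using eq that by (simp add: window_eq_iff)
  obtain i where i: "i < 2 ^ (k + 2)" "(p + i) mod 2 ^ (k + 2) = 2 ^ (k + 1)"
    using exists_add_mod_eq[of "2 ^ (k + 2)" "2 ^ (k + 1)" p] by auto
  obtain j where j: "j < 2 ^ (k + 2)" "(p' + j) mod 2 ^ (k + 2) = 2 ^ (k + 1)"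
    using exists_add_mod_eq[of "2 ^ (k + 2)" "2 ^ (k + 1)" p'] by auto
  have "\<not> i < L" using ruler_differs_at_mod_pow2[OF i(2) low ne] same by blast
  moreover have "\<not> j < L"
    using ruler_differs_at_mod_pow2[OF j(2) low[symmetric]] ne same by fastforce
  ultimately have "i = L" "j = L" using i j le by auto
  then have "(p + L) mod 2 ^ (k + 2) = (p' + L) mod 2 ^ (k + 2)"
    using i j by simp
  then have "p mod 2 ^ (k + 2) = p' mod 2 ^ (k + 2)"
    by (simp add: nat_mod_eq_iff)
  then have "p mod 2 ^ (k + 2) mod 2 ^ (k + 1) = p' mod 2 ^ (k + 2) mod 2 ^ (k + 1)" by simp
  then show False using ne by (simp add: mod_mod_cancel le_imp_power_dvd)
qed

lemma mod_pow2_eq_if_window_eq: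
  assumes "window L p = window L p'" "2 ^ (k + 1) \<le> L + 1"
  shows "p mod 2 ^ k = p' mod 2 ^ k"
  using assms(2)
proof (induction k)
  case (Suc k)
  then have "2 ^ (k + 1) \<le> L + 1" by simp
  with Suc show ?case using mod_pow2_Suc_eq_if_window_eq[OF assms(1)] by simp
qed simp

lemma ruler_add_eq_if_mod_eq:
  assumes "p mod 2 ^ n = p' mod 2 ^ n" "0 < (p + i) mod 2 ^ n"
  shows "ruler (p + i) = ruler (p' + i)"
proof -
  have "(p' + i) mod 2 ^ n = (p + i) mod 2 ^ n" using assms(1) by (metis mod_add_left_eq)
  then show ?thesis using assms(2) ruler_mod_pow2 by metis
qed

text \<open>The letters of the window of length \<open>2^(n+1) - 1\<close> at \<open>p\<close> at the (one or two) multiples of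
  \<open>2^n\<close> it contains; the dummy \<open>A\<close> stands for the missing second one when \<open>p mod 2^n = 1\<close>.\<close>
definition signature :: "nat \<Rightarrow> nat \<Rightarrow> nat \<times> letter \<times> letter" where
  "signature n p =
     (p mod 2 ^ n, ruler (p + dist_to_multiple (2 ^ n) p),
      if p mod 2 ^ n = 1 then A else ruler (p + dist_to_multiple (2 ^ n) p + 2 ^ n))"

lemma window_eq_iff_signature_eq:
  assumes n: "0 < n"
  shows "window (2 ^ (n + 1) - 1) p = window (2 ^ (n + 1) - 1) p' \<longleftrightarrow> signature n p = signature n p'"
proof -
  let ?L = "2 ^ (n + 1) - 1" and ?N = "2 ^ n :: nat"
  have N: "1 < ?N" using one_less_power[OF _ n, of "2::nat"] by simp
  have L: "?L = 2 * ?N - 1" by simp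
  show ?thesis
  proof
    assume eq: "window ?L p = window ?L p'"
    then have r: "p mod ?N = p' mod ?N" by (rule mod_pow2_eq_if_window_eq) simp
    define d where "d = dist_to_multiple ?N p"
    have d': "dist_to_multiple ?N p' = d" using r by (simp add: d_def dist_to_multiple_def)
    have "d < ?L" using dist_to_multiple_lt[of ?N p] N by (simp add: d_def)
    moreover have "d + ?N < ?L" if "p mod ?N \<noteq> 1"
      using dist_to_multiple_add_lt[OF N that] by (simp add: d_def)
    ultimately show "signature n p = signature n p'"
      using eq r d' by (auto simp: signature_def window_eq_iff d_def add.assoc)
  next
    assume sig: "signature n p = signature n p'"
    have r: "p mod ?N = p' mod ?N" using sig by (simp add: signature_def)
    define d where "d = dist_to_multiple ?N p"
    have d': "dist_to_multiple ?N p' = d" using r by (simp add: d_def dist_to_multiple_def)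
    have "ruler (p + i) = ruler (p' + i)" if i: "i < ?L" for i
    proof (cases "(p + i) mod ?N = 0")
      case True
      with N i L consider "i = d" | "i = d + ?N" "p mod ?N \<noteq> 1"
        using multiples_in_window[of ?N p i] unfolding d_def by fastforce
      then show ?thesis
        by cases (use sig d' in \<open>auto simp: signature_def d_def add.assoc\<close>)
    qed (use r ruler_add_eq_if_mod_eq in blast)
    then show "window ?L p = window ?L p'" by (simp add: window_eq_iff)
  qed
qed

lemma signature_eq_multiple_letters:
  assumes "0 < p"
  shows "\<exists>m>0. signature n p = (p mod 2 ^ n, ruler (2 ^ n * m),
                                 if p mod 2 ^ n = 1 then A else ruler (2 ^ n * (m + 1)))"
proof -
  define m where "m = (p + dist_to_multiple (2 ^ n) p) div 2 ^ n"
  have "p + dist_to_multiple (2 ^ n) p = 2 ^ n * m"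
    using add_dist_to_multiple_mod[of "2 ^ n" p]
      mult_div_mod_eq[of "2 ^ n" "p + dist_to_multiple (2 ^ n) p"]
    by (simp add: m_def)
  moreover from this have "0 < m" using assms by (cases m) simp_all
  ultimately show ?thesis by (intro exI[of _ m]) (simp add: signature_def distrib_left add.commute)
qed

lemma signature_realizable:
  assumes r: "r < 2 ^ n" and m: "0 < m"
  shows "\<exists>p>0. signature n p = (r, ruler (2 ^ n * m), if r = 1 then A else ruler (2 ^ n * (m + 1)))"
proof -
  define p where "p = 2 ^ n * m - dist_to_multiple (2 ^ n) r"
  have "dist_to_multiple (2 ^ n) r < 2 ^ n" by (simp add: dist_to_multiple_lt)
  also have "2 ^ n \<le> (2::nat) ^ n * m" using m by simp
  finally have p: "p + dist_to_multiple (2 ^ n) r = 2 ^ n * m" "0 < p"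
    by (simp_all add: p_def)
  obtain k where k: "m = Suc k" using m by (cases m) auto
  have "p mod 2 ^ n = r"
  proof (cases "r = 0")
    case True
    then have "p = 2 ^ n * (k + 1)" by (simp add: p_def k dist_to_multiple_def)
    then show ?thesis using True by simp
  next
    case False
    then have "p = 2 ^ n * k + r" using r by (simp add: p_def k dist_to_multiple_def)
    then show ?thesis using r by simp
  qed
  moreover have "dist_to_multiple (2 ^ n) p = dist_to_multiple (2 ^ n) r"
    using calculation r by (simp add: dist_to_multiple_def)
  ultimately show ?thesis
    using p by (intro exI[of _ p]) (simp add: signature_def distrib_left add.commute)
qed

lemma ruler_multiple_in_XYZ: "0 < n \<Longrightarrow> 0 < m \<Longrightarrow> ruler (2 ^ n * m) \<in> {X, Y, Z}"
  by (rule ruler_even_in_XYZ) simp_all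

lemma ruler_multiple_onto_XYZ:
  assumes "0 < n" "d \<in> {X, Y, Z}" shows "\<exists>m>0. ruler (2 ^ n * m) = d"
proof -
  obtain e where "(rot_letter ^^ (n + e)) A = d"
    using rot_letter_pow_A_onto_XYZ[OF assms] by blast
  then have "ruler (2 ^ n * 2 ^ e) = d"
    using ruler_pow2_mult_odd[of 1 "n + e"] by (simp add: power_add)
  then show ?thesis by (intro exI[of _ "2 ^ e"]) simp
qed

definition multiple_letter_pairs :: "nat \<Rightarrow> (letter \<times> letter) set" where
  "multiple_letter_pairs n = {(rot_letter ^^ n) A} \<times> {X, Y, Z} \<union> {X, Y, Z} \<times> {(rot_letter ^^ n) A}"

lemma consecutive_multiples_letters:
  assumes n: "0 < n" and m: "0 < m"
  shows "(ruler (2 ^ n * m), ruler (2 ^ n * (m + 1))) \<in> multiple_letter_pairs n"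
proof (cases "odd m")
  case True
  then have "ruler (2 ^ n * m) = (rot_letter ^^ n) A" by (rule ruler_pow2_mult_odd)
  then show ?thesis
    using ruler_multiple_in_XYZ[OF n, of "m + 1"] by (simp add: multiple_letter_pairs_def)
next
  case False
  then have "ruler (2 ^ n * (m + 1)) = (rot_letter ^^ n) A" by (intro ruler_pow2_mult_odd) simp
  then show ?thesis using ruler_multiple_in_XYZ[OF n m] by (simp only: multiple_letter_pairs_def) blast
qed

lemma consecutive_multiples_letters_onto:
  assumes n: "0 < n"
    and cd: "cd \<in> multiple_letter_pairs n"
  shows "\<exists>m>0. (ruler (2 ^ n * m), ruler (2 ^ n * (m + 1))) = cd"
proof -
  have "\<exists>e. (rot_letter ^^ (n + 1 + e)) A = d" if "d \<in> {X, Y, Z}" for d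
    using rot_letter_pow_A_onto_XYZ[OF _ that, of "n + 1"] by simp
  then obtain d e where
    cases: "cd = ((rot_letter ^^ n) A, d) \<or> cd = (d, (rot_letter ^^ n) A)"
    and e: "(rot_letter ^^ (n + 1 + e)) A = d"
    using cd unfolding multiple_letter_pairs_def by blast
  have "(2::nat) ^ n * 2 ^ (e + 1) = 2 ^ (n + 1 + e) * 1" by (simp add: power_add)
  then have top: "ruler (2 ^ n * 2 ^ (e + 1)) = d"
    by (simp only: ruler_pow2_mult_odd[OF odd_one] e)
  from cases show ?thesis
  proof
    assume "cd = ((rot_letter ^^ n) A, d)"
    moreover have "(1::nat) < 2 ^ (e + 1)" using one_less_power[of "2::nat" "e + 1"] by simp
    moreover have "ruler (2 ^ n * (2 ^ (e + 1) - 1)) = (rot_letter ^^ n) A"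
      by (rule ruler_pow2_mult_odd) simp
    ultimately show ?thesis using top by (intro exI[of _ "2 ^ (e + 1) - 1"]) auto
  next
    assume "cd = (d, (rot_letter ^^ n) A)"
    moreover have "ruler (2 ^ n * (2 ^ (e + 1) + 1)) = (rot_letter ^^ n) A"
      by (rule ruler_pow2_mult_odd) simp
    ultimately show ?thesis using top by (intro exI[of _ "2 ^ (e + 1)"]) auto
  qed
qed

lemma card_multiple_letter_pairs: "0 < n \<Longrightarrow> card (multiple_letter_pairs n) = 5"
  using rot_letter_pow_A_in_XYZ[of n] by (auto simp: multiple_letter_pairs_def card_insert_if)

lemma signature_image:
  assumes n: "0 < n"
  shows "signature n ` {p. 0 < p}
           = {1} \<times> ({X, Y, Z} \<times> {A}) \<union> ({..<2 ^ n} - {1}) \<times> multiple_letter_pairs n"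
    (is "_ = ?S")
proof
  show "signature n ` {p. 0 < p} \<subseteq> ?S"
  proof (rule image_subsetI)
    fix p :: nat assume "p \<in> {p. 0 < p}"
    then obtain m where "0 < m" and sig: "signature n p = (p mod 2 ^ n, ruler (2 ^ n * m),
                               if p mod 2 ^ n = 1 then A else ruler (2 ^ n * (m + 1)))"
      using signature_eq_multiple_letters by blast
    show "signature n p \<in> ?S"
    proof (cases "p mod 2 ^ n = 1")
      case True
      then show ?thesis using sig ruler_multiple_in_XYZ[OF n \<open>0 < m\<close>] by simp
    next
      case False
      then show ?thesis using sig consecutive_multiples_letters[OF n \<open>0 < m\<close>] by simp
    qed
  qed
next
  have N1: "1 < (2::nat) ^ n" using one_less_power[OF _ n, of "2::nat"] by simp
  show "?S \<subseteq> signature n ` {p. 0 < p}"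
  proof
    fix t assume "t \<in> ?S"
    then consider (one) d where "d \<in> {X, Y, Z}" "t = (1, d, A)"
      | (other) r cd where "r < 2 ^ n" "r \<noteq> 1" "cd \<in> multiple_letter_pairs n" "t = (r, cd)"
      by blast
    then show "t \<in> signature n ` {p. 0 < p}"
    proof cases
      case one
      obtain m where m: "0 < m" "ruler (2 ^ n * m) = d"
        using ruler_multiple_onto_XYZ[OF n one(1)] by blast
      obtain p where p: "0 < p" "signature n p = (1, ruler (2 ^ n * m), A)"
        using signature_realizable[OF N1 m(1)] by auto
      have "t = signature n p" using m one(2) p(2) by simp
      with p(1) show ?thesis by blast
    next
      case other
      obtain m where m: "0 < m" "(ruler (2 ^ n * m), ruler (2 ^ n * (m + 1))) = cd"
        using consecutive_multiples_letters_onto[OF n other(3)] by blast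
      obtain p where p: "0 < p" "signature n p = (r, ruler (2 ^ n * m), ruler (2 ^ n * (m + 1)))"
        using signature_realizable[OF other(1) m(1)] other(2) by auto
      have "t = signature n p" using m other(4) p(2) by simp
      with p(1) show ?thesis by blast
    qed
  qed
qed

lemma card_signature_image:
  assumes n: "0 < n" shows "card (signature n ` {p. 0 < p}) = 3 + (2 ^ n - 1) * 5"
proof -
  have "card ({..<2 ^ n} - {1::nat}) = 2 ^ n - 1"
    using one_less_power[OF _ n, of "2::nat"] by simp
  moreover have "card ({1::nat} \<times> ({X, Y, Z} \<times> {A})) = 3" by simp
  moreover have "finite (multiple_letter_pairs n)" by (simp add: multiple_letter_pairs_def)
  ultimately show ?thesis
    unfolding signature_image[OF n]
    by (subst card_Un_disjoint) (auto simp: card_cartesian_product card_multiple_letter_pairs[OF n])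
qed

lemma tau_append: "tau (u @ v) = tau u @ tau v"
  by (simp add: tau_def)

lemma tau_pow_append: "(tau ^^ n) (u @ v) = (tau ^^ n) u @ (tau ^^ n) v"
  by (induction n) (simp_all add: tau_append)

lemma tau_single_non_A: "d \<noteq> A \<Longrightarrow> tau [d] = [rot_letter d]"
  by (cases d) (simp_all add: tau_def)

lemma tau_pow_single_non_A: "d \<noteq> A \<Longrightarrow> (tau ^^ n) [d] = [(rot_letter ^^ n) d]"
proof (induction n)
  case (Suc n)
  have "(rot_letter ^^ n) d \<noteq> A" using Suc.prems rot_letter_neq(2) by (cases n) simp_all
  with Suc show ?case by (simp add: tau_single_non_A)
qed simp

lemma tau_pow_A: "(tau ^^ n) [A] = map ruler [1..<2 ^ (n + 1)]"
proof (induction n)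
  case 0
  show ?case by (simp add: tau_def numeral_2_eq_2 ruler_odd)
next
  case (Suc n)
  define N :: nat where "N = 2 ^ (n + 1)"
  have N: "1 \<le> N" by (simp add: N_def)
  have period: "map ruler [N + 1..<N + N] = map ruler [1..<N]"
  proof (rule nth_equalityI)
    fix i assume "i < length (map ruler [N + 1..<N + N])"
    then have i: "1 + i < N" by simp
    have "ruler (N + (1 + i)) = ruler (1 + i)"
      unfolding N_def by (rule ruler_pow2_add) (use i in \<open>simp_all add: N_def\<close>)
    then show "map ruler [N + 1..<N + N] ! i = map ruler [1..<N] ! i"
      using i by (simp add: add.assoc)
  qed simp
  have middle: "ruler N = (rot_letter ^^ Suc n) A"
    unfolding N_def ruler_pow2_mult_odd[OF odd_one, symmetric] by simp
  have "[1..<N + N] = [1..<N] @ [N..<N + N]" using N by (rule upt_add_eq_append)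
  also have "[N..<N + N] = N # [N + 1..<N + N]" using N by (simp add: upt_conv_Cons)
  finally have split: "[1..<N + N] = [1..<N] @ N # [N + 1..<N + N]" .
  have "(tau ^^ Suc n) [A] = (tau ^^ n) ([A] @ [X] @ [A])"
    by (simp only: funpow_Suc_right comp_apply) (simp add: tau_def)
  also have "\<dots> = map ruler [1..<N] @ [(rot_letter ^^ Suc n) A] @ map ruler [1..<N]"
    by (simp only: tau_pow_append) (simp add: tau_pow_single_non_A Suc N_def funpow_swap1)
  also have "\<dots> = map ruler [1..<N + N]"
    using split period middle by simp
  finally show ?case by (simp add: N_def)
qed

lemma factors_eq_windows:
  assumes "2 \<le> L" shows "{v \<in> Sub_tau. length v = L} = window L ` {p. 0 < p}"
proof
  show "{v \<in> Sub_tau. length v = L} \<subseteq> window L ` {p. 0 < p}"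
  proof
    fix v assume "v \<in> {v \<in> Sub_tau. length v = L}"
    then obtain c m where v: "v \<in> Sub ((tau ^^ m) [c])" and len: "length v = L"
      unfolding Sub_tau_def by blast
    show "v \<in> window L ` {p. 0 < p}"
    proof (cases "c = A")
      case True
      with v len show ?thesis
        by (auto simp: tau_pow_A Sub_map_upt window_def)
    next
      case False
      then have "length v \<le> 1"
        using v by (auto simp: Sub_def tau_pow_single_non_A dest!: arg_cong[where f = length])
      with assms len show ?thesis by simp
    qed
  qed
next
  show "window L ` {p. 0 < p} \<subseteq> {v \<in> Sub_tau. length v = L}"
  proof (rule image_subsetI)
    fix p :: nat assume "p \<in> {p. 0 < p}"
    moreover have "p + L < 2 ^ (p + L + 1)" by (rule less_le_trans[OF less_exp]) simp
    ultimately have "\<exists>q\<ge>1. q + L \<le> 2 ^ (p + L + 1) \<and> window L p = map ruler [q..<q + L]"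
      by (intro exI[of _ p]) (simp add: window_def)
    then have "window L p \<in> Sub ((tau ^^ (p + L)) [A])"
      by (simp add: tau_pow_A Sub_map_upt window_def)
    then show "window L p \<in> {v \<in> Sub_tau. length v = L}"
      by (auto simp: Sub_tau_def window_def)
  qed
qed

theorem mainTheorem6:
  fixes n :: nat
  assumes "n \<ge> 2"
  shows "length ((tau ^^ n) [A]) = 2 ^ (n + 1) - 1
         \<and> complexity (2 ^ (n + 1) - 1) = 2 ^ (n + 2) + 2 ^ n - 2"
proof
  show "length ((tau ^^ n) [A]) = 2 ^ (n + 1) - 1" by (simp add: tau_pow_A)
  have n: "0 < n" using assms by simp
  have "(2::nat) ^ 2 \<le> 2 ^ (n + 1)" using assms by (intro power_increasing) simp_all
  then have "complexity (2 ^ (n + 1) - 1) = card (window (2 ^ (n + 1) - 1) ` {p. 0 < p})"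
    unfolding complexity_def by (subst factors_eq_windows) simp_all
  also have "\<dots> = card (signature n ` {p. 0 < p})"
    using window_eq_iff_signature_eq[OF n] by (rule card_image_eq_if_same_fibres)
  also have "\<dots> = 3 + (2 ^ n - 1) * 5" by (rule card_signature_image[OF n])
  also have "\<dots> = 2 ^ (n + 2) + 2 ^ n - 2"
  proof -
    have "(1::nat) \<le> 2 ^ n" "(2::nat) ^ (n + 2) = 4 * 2 ^ n" by (simp_all add: power_add)
    then show ?thesis by linarith
  qed
  finally show "complexity (2 ^ (n + 1) - 1) = 2 ^ (n + 2) + 2 ^ n - 2" .
qed

end
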